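(* Let $(L,\vee,\wedge,\to,\gets,f,g,0,1)$ be a complete and weakly atomic HBGC-algebra. Then there exists a GC-frame $\mathcal{F}=(X,\leq,R)$ such that $(L,\vee,\wedge,\to,\gets,f,g,0,1)$ is isomorphic to the complex algebra $\mathbb{HB}_{\rm GC}(\mathcal{F})=(\mathcal{T}_\leq,\cup,\cap,\to,\gets,{}^\blacktriangle,{}^\blacktriangledown,\emptyset,X)$.
   Context: A Heyting–Brouwer algebra $(L,\vee,\wedge,\to,\gets,0,1)$ is a bounded lattice in which for all $a,b$ the relative pseudocomplement $a\to b$ (greatest $x$ with $a\wedge x\leq b$) exists and the co-implication $a\gets b$ (least $x$ with $b\leq a\vee x$) exists. A pair $(f,g)$ of maps $L\to L$ is an (order-preserving) Galois connection if $f(a)\leq b\iff a\leq g(b)$ for all $a,b\in L$. An HBGC-algebra is a Heyting–Brouwer algebra equipped with an order-preserving Galois connection $(f,g)$ on $L$; it is complete if its underlying lattice is complete, and weakly atomic if its underlying lattice is weakly atomic, i.e. whenever $x<y$ there exist $a,b$ with $x\leq a\prec b\leq y$, where $\prec$ is the covering relation. A GC-frame $(X,\leq,R)$ is a set $X$ with a quasiorder $\leq$ and a relation $R\subseteq X\times X$ such that $x\leq x'$, $x\,R\,y$, $y'\leq y$ imply $x'\,R\,y'$. $\mathcal{T}_\leq$ is the set of upward $\leq$-closed subsets of $X$. For $A\subseteq X$: $A^\blacktriangle=\{x\mid x\,R\,y\text{ for some }y\in A\}$, $A^\blacktriangledown=\{x\mid y\,R\,x\text{ implies }y\in A\}$.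 On $\mathcal{T}_\leq$: $A\to B=\{a\in X\mid \forall b\geq a\,(b\in A\Rightarrow b\in B)\}$ and $A\gets B=\{a\in X\mid \exists b\leq a\,(b\notin A\text{ and }b\in B)\}$. Isomorphism is with respect to all operations $\vee,\wedge,\to,\gets,f,g,0,1$ ($f\leftrightarrow{}^\blacktriangle$, $g\leftrightarrow{}^\blacktriangledown$). *)

theory Defs
  imports Main
begin

definition hb_imp :: "'a::complete_lattice \<Rightarrow> 'a \<Rightarrow> 'a" where
  "hb_imp a b = (GREATEST x. inf a x \<le> b)"

definition hb_coimp :: "'a::complete_lattice \<Rightarrow> 'a \<Rightarrow> 'a" where
  "hb_coimp a b = (LEAST x. b \<le> sup a x)"

definition heyting_brouwer :: "'a::complete_lattice itself \<Rightarrow> bool" where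
  "heyting_brouwer _ \<longleftrightarrow>
     (\<forall>a b::'a. \<exists>x. inf a x \<le> b \<and> (\<forall>y. inf a y \<le> b \<longrightarrow> y \<le> x)) \<and>
     (\<forall>a b::'a. \<exists>x. b \<le> sup a x \<and> (\<forall>y. b \<le> sup a y \<longrightarrow> x \<le> y))"

definition galois_conn :: "('a::order \<Rightarrow> 'a) \<Rightarrow> ('a \<Rightarrow> 'a) \<Rightarrow> bool" where
  "galois_conn f g \<longleftrightarrow> (\<forall>a b. f a \<le> b \<longleftrightarrow> a \<le> g b)"

definition covers :: "'a::order \<Rightarrow> 'a \<Rightarrow> bool" where
  "covers a b \<longleftrightarrow> a < b \<and> \<not> (\<exists>z. a < z \<and> z < b)"

definition weakly_atomic :: "'a::order itself \<Rightarrow> bool" where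
  "weakly_atomic _ \<longleftrightarrow>
     (\<forall>x y::'a. x < y \<longrightarrow> (\<exists>a b. x \<le> a \<and> covers a b \<and> b \<le> y))"

definition gc_frame :: "'b set \<Rightarrow> ('b \<Rightarrow> 'b \<Rightarrow> bool) \<Rightarrow> ('b \<Rightarrow> 'b \<Rightarrow> bool) \<Rightarrow> bool" where
  "gc_frame X le R \<longleftrightarrow>
     (\<forall>x y. le x y \<longrightarrow> x \<in> X \<and> y \<in> X) \<and>
     (\<forall>x y. R x y \<longrightarrow> x \<in> X \<and> y \<in> X) \<and>
     (\<forall>x\<in>X. le x x) \<and>
     (\<forall>x y z. le x y \<longrightarrow> le y z \<longrightarrow> le x z) \<and>
     (\<forall>x x' y y'. le x x' \<longrightarrow> R x y \<longrightarrow> le y' y \<longrightarrow> R x' y')"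

definition up_sets :: "'b set \<Rightarrow> ('b \<Rightarrow> 'b \<Rightarrow> bool) \<Rightarrow> 'b set set" where
  "up_sets X le = {A. A \<subseteq> X \<and> (\<forall>a b. a \<in> A \<longrightarrow> le a b \<longrightarrow> b \<in> A)}"

definition up_imp :: "'b set \<Rightarrow> ('b \<Rightarrow> 'b \<Rightarrow> bool) \<Rightarrow> 'b set \<Rightarrow> 'b set \<Rightarrow> 'b set" where
  "up_imp X le A B = {a\<in>X. \<forall>b. le a b \<longrightarrow> b \<in> A \<longrightarrow> b \<in> B}"

definition up_coimp :: "'b set \<Rightarrow> ('b \<Rightarrow> 'b \<Rightarrow> bool) \<Rightarrow> 'b set \<Rightarrow> 'b set \<Rightarrow> 'b set" where
  "up_coimp X le A B = {a\<in>X. \<exists>b. le b a \<and> b \<notin> A \<and> b \<in> B}"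

definition blacktri_up :: "'b set \<Rightarrow> ('b \<Rightarrow> 'b \<Rightarrow> bool) \<Rightarrow> 'b set \<Rightarrow> 'b set" where
  "blacktri_up X R A = {x\<in>X. \<exists>y\<in>A. R x y}"

definition blacktri_down :: "'b set \<Rightarrow> ('b \<Rightarrow> 'b \<Rightarrow> bool) \<Rightarrow> 'b set \<Rightarrow> 'b set" where
  "blacktri_down X R A = {x\<in>X. \<forall>y. R y x \<longrightarrow> y \<in> A}"

end

theory Submission
  imports Defs
begin

text \<open>The points of the frame are the completely join-prime elements of L, ordered by the
  converse of the lattice order, with x R y iff x \<le> f y, and a is represented by the set of
  completely join-prime elements below it. Since L is a Heyting algebra, binary meets distribute
  over arbitrary joins; hence for a covering c \<prec> d the co-implication c \<leftarrow> d is completely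
  join-prime, lies below d and not below c. Weak atomicity then makes every element the join of
  the completely join-prime elements below it, and join-density together with complete
  join-primality turns each operation of L into the corresponding set operation.\<close>

lemma hb_imp_iff:
  fixes a b y :: "'a::complete_lattice"
  assumes "heyting_brouwer TYPE('a)"
  shows "inf a y \<le> b \<longleftrightarrow> y \<le> hb_imp a b"
proof -
  obtain x where x: "inf a x \<le> b" "\<And>y. inf a y \<le> b \<Longrightarrow> y \<le> x"
    using assms unfolding heyting_brouwer_def by blast
  have "hb_imp a b = x" unfolding hb_imp_def
    by (rule Greatest_equality) (use x in auto)
  moreover have "inf a y \<le> b" if "y \<le> x"
    using order.trans[OF inf_mono[OF order_refl that] x(1)] .
  ultimately show ?thesis using x(2) by auto
qed

lemma hb_coimp_iff:
  fixes a b y :: "'a::complete_lattice"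
  assumes "heyting_brouwer TYPE('a)"
  shows "b \<le> sup a y \<longleftrightarrow> hb_coimp a b \<le> y"
proof -
  obtain x where x: "b \<le> sup a x" "\<And>y. b \<le> sup a y \<Longrightarrow> x \<le> y"
    using assms unfolding heyting_brouwer_def by blast
  have "hb_coimp a b = x" unfolding hb_coimp_def
    by (rule Least_equality) (use x in auto)
  moreover have "b \<le> sup a y" if "x \<le> y"
    using order.trans[OF x(1) sup_mono[OF order_refl that]] .
  ultimately show ?thesis using x(2) by auto
qed

lemma inf_Sup_heyting_brouwer:
  fixes a :: "'a::complete_lattice"
  assumes "heyting_brouwer TYPE('a)"
  shows "inf a (Sup S) = Sup (inf a ` S)"
proof (rule antisym)
  have "s \<le> hb_imp a (Sup (inf a ` S))" if "s \<in> S" for s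
    using SUP_upper[OF that, of "inf a"] hb_imp_iff[OF assms] by blast
  then have "Sup S \<le> hb_imp a (Sup (inf a ` S))" by (simp add: Sup_le_iff)
  then show "inf a (Sup S) \<le> Sup (inf a ` S)" using hb_imp_iff[OF assms] by blast
  show "Sup (inf a ` S) \<le> inf a (Sup S)"
    by (rule SUP_least) (rule inf_mono[OF order_refl Sup_upper])
qed

lemma galois_conn_mono:
  assumes "galois_conn f g"
  shows "mono (f :: 'a::order \<Rightarrow> 'a)"
proof
  fix a b :: 'a assume "a \<le> b"
  moreover have "b \<le> g (f b)" using assms unfolding galois_conn_def by blast
  ultimately show "f a \<le> f b" using assms unfolding galois_conn_def by (blast intro: order.trans)
qed

lemma galois_conn_Sup:
  assumes "galois_conn f g"
  shows "f (Sup S) = Sup (f ` (S :: 'a::complete_lattice set))"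
proof (rule antisym)
  have "s \<le> g (Sup (f ` S))" if "s \<in> S" for s
    using SUP_upper[OF that, of f] assms unfolding galois_conn_def by blast
  then have "Sup S \<le> g (Sup (f ` S))" by (simp add: Sup_le_iff)
  then show "f (Sup S) \<le> Sup (f ` S)" using assms unfolding galois_conn_def by blast
  show "Sup (f ` S) \<le> f (Sup S)"
    by (rule SUP_least) (rule monoD[OF galois_conn_mono[OF assms] Sup_upper])
qed

definition completely_join_prime :: "'a::complete_lattice \<Rightarrow> bool" where
  "completely_join_prime p \<longleftrightarrow> (\<forall>S. p \<le> Sup S \<longrightarrow> (\<exists>s\<in>S. p \<le> s))"

lemma completely_join_primeD:
  "completely_join_prime p \<Longrightarrow> p \<le> Sup S \<Longrightarrow> \<exists>s\<in>S. p \<le> s"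
  unfolding completely_join_prime_def by blast

lemma completely_join_prime_sup:
  "completely_join_prime p \<Longrightarrow> p \<le> sup a b \<Longrightarrow> p \<le> a \<or> p \<le> b"
  using completely_join_primeD[of p "{a, b}"] by auto

lemma completely_join_prime_not_bot: "completely_join_prime p \<Longrightarrow> \<not> p \<le> bot"
  using completely_join_primeD[of p "{}"] by auto

lemma covers_sup_eq:
  fixes c d x :: "'a::lattice"
  assumes "covers c d" "x \<le> d" "\<not> x \<le> c"
  shows "sup c x = d"
proof -
  have "c \<noteq> sup c x" using assms(3) by (metis sup.cobounded2)
  then have "c < sup c x" by (simp add: less_le)
  moreover have "sup c x \<le> d" using assms(1,2) unfolding covers_def by (simp add: less_imp_le)
  ultimately show ?thesis using assms(1) unfolding covers_def by (metis order.not_eq_order_implies_strict)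
qed

lemma completely_join_prime_hb_coimp_covers:
  fixes c d :: "'a::complete_lattice"
  assumes hb: "heyting_brouwer TYPE('a)" and cov: "covers c d"
  shows "completely_join_prime (hb_coimp c d)" and "hb_coimp c d \<le> d" and "\<not> hb_coimp c d \<le> c"
proof -
  define p where "p = hb_coimp c d"
  have least: "p \<le> x" if "x \<le> d" "\<not> x \<le> c" for x
    using covers_sup_eq[OF cov that] hb_coimp_iff[OF hb] p_def by (metis order_refl)
  show pd: "p \<le> d" unfolding p_def[symmetric] using least[of d] cov unfolding covers_def by auto
  show pc: "\<not> p \<le> c" unfolding p_def[symmetric]
  proof
    assume "p \<le> c"
    moreover have "d \<le> sup c p" using hb_coimp_iff[OF hb] p_def by blast
    ultimately show False using cov unfolding covers_def by (simp add: sup_absorb1 leD)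
  qed
  show "completely_join_prime p" unfolding completely_join_prime_def
  proof (intro allI impI)
    fix S assume "p \<le> Sup S"
    then have "p = Sup (inf p ` S)" using inf_Sup_heyting_brouwer[OF hb, of p S] by (simp add: inf_absorb1)
    with pc have "\<exists>s\<in>S. \<not> inf p s \<le> c" by (metis SUP_least)
    then obtain s where "s \<in> S" "\<not> inf p s \<le> c" by blast
    moreover have "inf p s \<le> d" using pd by (simp add: le_infI1)
    ultimately show "\<exists>s\<in>S. p \<le> s" using least by (meson le_inf_iff)
  qed
qed

definition cjp_below :: "'a::complete_lattice \<Rightarrow> 'a set" where
  "cjp_below a = {j. completely_join_prime j \<and> j \<le> a}"

lemma Sup_cjp_below:
  fixes a :: "'a::complete_lattice"
  assumes hb: "heyting_brouwer TYPE('a)" and wa: "weakly_atomic TYPE('a)"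
  shows "Sup (cjp_below a) = a"
proof (rule ccontr)
  define b where "b = Sup (cjp_below a)"
  assume "Sup (cjp_below a) \<noteq> a"
  moreover have "b \<le> a" unfolding b_def cjp_below_def by (auto intro: Sup_least)
  ultimately have "b < a" using b_def by auto
  then obtain c d where "b \<le> c" "covers c d" "d \<le> a"
    using wa unfolding weakly_atomic_def by blast
  then have "hb_coimp c d \<in> cjp_below a" "\<not> hb_coimp c d \<le> b"
    using completely_join_prime_hb_coimp_covers[OF hb] unfolding cjp_below_def by force+
  then show False unfolding b_def by (simp add: Sup_upper)
qed

lemma le_by_cjp_below:
  fixes a b :: "'a::complete_lattice"
  assumes dense: "\<And>x::'a. Sup (cjp_below x) = x"
    and "\<And>j. completely_join_prime j \<Longrightarrow> j \<le> a \<Longrightarrow> j \<le> b"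
  shows "a \<le> b"
  by (subst dense[of a, symmetric]) (auto simp: cjp_below_def intro!: Sup_least assms(2))

definition cjp_ge :: "'a::complete_lattice \<Rightarrow> 'a \<Rightarrow> bool" where
  "cjp_ge x y \<longleftrightarrow> completely_join_prime x \<and> completely_join_prime y \<and> y \<le> x"

definition cjp_rel :: "('a::complete_lattice \<Rightarrow> 'a) \<Rightarrow> 'a \<Rightarrow> 'a \<Rightarrow> bool" where
  "cjp_rel f x y \<longleftrightarrow> completely_join_prime x \<and> completely_join_prime y \<and> x \<le> f y"

lemma gc_frame_cjp:
  assumes "mono f"
  shows "gc_frame (Collect completely_join_prime) cjp_ge (cjp_rel f)"
  unfolding gc_frame_def cjp_ge_def cjp_rel_def
proof (intro conjI allI impI ballI; (elim conjE)?)
  fix x x' y y' assume "x' \<le> x" "x \<le> f y" "y \<le> y'"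
  then show "x' \<le> f y'" using monoD[OF assms, of y y'] by (metis order.trans)
qed (auto intro: order.trans)

lemma bij_betw_cjp_below:
  assumes dense: "\<And>x::'a::complete_lattice. Sup (cjp_below x) = x"
  shows "bij_betw cjp_below (UNIV::'a set) (up_sets (Collect completely_join_prime) cjp_ge)"
proof (rule bij_betwI')
  show "cjp_below x = cjp_below y \<longleftrightarrow> x = y" for x y :: 'a by (metis dense)
  show "cjp_below x \<in> up_sets (Collect completely_join_prime) cjp_ge" for x
    unfolding up_sets_def cjp_below_def cjp_ge_def by auto
  show "\<exists>x\<in>UNIV. D = cjp_below x" if "D \<in> up_sets (Collect completely_join_prime) cjp_ge" for D
  proof
    have "D \<subseteq> Collect completely_join_prime"
      and down: "\<And>a b. a \<in> D \<Longrightarrow> completely_join_prime b \<Longrightarrow> b \<le> a \<Longrightarrow> b \<in> D"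
      using that unfolding up_sets_def cjp_ge_def by auto
    then show "D = cjp_below (Sup D)"
      unfolding cjp_below_def by (blast intro: Sup_upper dest: completely_join_primeD)
  qed simp
qed

lemma cjp_below_sup: "cjp_below (sup a b) = cjp_below a \<union> cjp_below b"
  unfolding cjp_below_def using completely_join_prime_sup by (auto intro: le_supI1 le_supI2)

lemma cjp_below_inf: "cjp_below (inf a b) = cjp_below a \<inter> cjp_below b"
  unfolding cjp_below_def by auto

lemma cjp_below_bot: "cjp_below bot = {}"
  unfolding cjp_below_def using completely_join_prime_not_bot by auto

lemma cjp_below_top: "cjp_below top = Collect completely_join_prime"
  unfolding cjp_below_def by auto

lemma cjp_below_hb_imp:
  fixes a b :: "'a::complete_lattice"
  assumes hb: "heyting_brouwer TYPE('a)" and dense: "\<And>x::'a. Sup (cjp_below x) = x"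
  shows "cjp_below (hb_imp a b)
    = up_imp (Collect completely_join_prime) cjp_ge (cjp_below a) (cjp_below b)"
proof (intro equalityI subsetI)
  fix j assume "j \<in> cjp_below (hb_imp a b)"
  then have j: "completely_join_prime j" and "inf a j \<le> b"
    using hb_imp_iff[OF hb] unfolding cjp_below_def by auto
  then have "k \<le> b" if "k \<le> j" "k \<le> a" for k
    using that by (meson le_inf_iff order.trans)
  then show "j \<in> up_imp (Collect completely_join_prime) cjp_ge (cjp_below a) (cjp_below b)"
    using j unfolding up_imp_def cjp_ge_def cjp_below_def by auto
next
  fix j assume "j \<in> up_imp (Collect completely_join_prime) cjp_ge (cjp_below a) (cjp_below b)"
  then have j: "completely_join_prime j"
    and below: "\<And>k. completely_join_prime k \<Longrightarrow> k \<le> j \<Longrightarrow> k \<le> a \<Longrightarrow> k \<le> b"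
    unfolding up_imp_def cjp_ge_def cjp_below_def by auto
  have "inf a j \<le> b"
    by (rule le_by_cjp_below[OF dense]) (simp add: below)
  then show "j \<in> cjp_below (hb_imp a b)" using j hb_imp_iff[OF hb] unfolding cjp_below_def by blast
qed

lemma cjp_below_hb_coimp:
  fixes a b :: "'a::complete_lattice"
  assumes hb: "heyting_brouwer TYPE('a)" and dense: "\<And>x::'a. Sup (cjp_below x) = x"
  shows "cjp_below (hb_coimp a b)
    = up_coimp (Collect completely_join_prime) cjp_ge (cjp_below a) (cjp_below b)"
proof (intro equalityI subsetI)
  fix j assume "j \<in> cjp_below (hb_coimp a b)"
  then have j: "completely_join_prime j" "j \<le> hb_coimp a b" unfolding cjp_below_def by auto
  define Y where "Y = cjp_below b - cjp_below a"
  have "b \<le> sup a (Sup Y)"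
    by (rule le_by_cjp_below[OF dense]) (auto simp: Y_def cjp_below_def intro: le_supI1 le_supI2 Sup_upper)
  then have "j \<le> Sup Y" using j(2) hb_coimp_iff[OF hb] by (meson order_trans)
  then obtain k where "k \<in> Y" "j \<le> k" using completely_join_primeD[OF j(1)] by blast
  then show "j \<in> up_coimp (Collect completely_join_prime) cjp_ge (cjp_below a) (cjp_below b)"
    using j(1) unfolding up_coimp_def cjp_ge_def Y_def cjp_below_def by auto
next
  fix j assume "j \<in> up_coimp (Collect completely_join_prime) cjp_ge (cjp_below a) (cjp_below b)"
  then obtain k where k: "completely_join_prime j" "completely_join_prime k" "j \<le> k"
      "\<not> k \<le> a" "k \<le> b"
    unfolding up_coimp_def cjp_ge_def cjp_below_def by auto
  have "b \<le> sup a (hb_coimp a b)" using hb_coimp_iff[OF hb] by blast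
  then have "k \<le> hb_coimp a b" using k completely_join_prime_sup by (metis order_trans)
  then show "j \<in> cjp_below (hb_coimp a b)" using k unfolding cjp_below_def by auto
qed

lemma cjp_below_galois_lower:
  fixes a :: "'a::complete_lattice"
  assumes gc: "galois_conn f g" and dense: "\<And>x::'a. Sup (cjp_below x) = x"
  shows "cjp_below (f a) = blacktri_up (Collect completely_join_prime) (cjp_rel f) (cjp_below a)"
proof (intro equalityI subsetI)
  fix j assume "j \<in> cjp_below (f a)"
  then have j: "completely_join_prime j" "j \<le> f (Sup (cjp_below a))"
    unfolding dense by (simp_all add: cjp_below_def)
  then have "j \<le> Sup (f ` cjp_below a)" by (simp add: galois_conn_Sup[OF gc])
  then obtain y where "y \<in> cjp_below a" "j \<le> f y" using completely_join_primeD[OF j(1)] by blast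
  then show "j \<in> blacktri_up (Collect completely_join_prime) (cjp_rel f) (cjp_below a)"
    using j(1) unfolding blacktri_up_def cjp_rel_def cjp_below_def by auto
next
  fix j assume "j \<in> blacktri_up (Collect completely_join_prime) (cjp_rel f) (cjp_below a)"
  then obtain y where "completely_join_prime j" "y \<le> a" "j \<le> f y"
    unfolding blacktri_up_def cjp_rel_def cjp_below_def by auto
  moreover have "f y \<le> f a" using monoD[OF galois_conn_mono[OF gc] \<open>y \<le> a\<close>] .
  ultimately show "j \<in> cjp_below (f a)" unfolding cjp_below_def by (simp add: order.trans)
qed

lemma cjp_below_galois_upper:
  fixes a :: "'a::complete_lattice"
  assumes gc: "galois_conn f g" and dense: "\<And>x::'a. Sup (cjp_below x) = x"
  shows "cjp_below (g a) = blacktri_down (Collect completely_join_prime) (cjp_rel f) (cjp_below a)"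
proof -
  have "j \<le> g a \<longleftrightarrow> (\<forall>y. cjp_rel f y j \<longrightarrow> y \<le> a)" if j: "completely_join_prime j" for j
  proof -
    have "j \<le> g a \<longleftrightarrow> f j \<le> a" using gc unfolding galois_conn_def by blast
    also have "\<dots> \<longleftrightarrow> (\<forall>y. cjp_rel f y j \<longrightarrow> y \<le> a)"
    proof
      show "\<forall>y. cjp_rel f y j \<longrightarrow> y \<le> a" if "f j \<le> a"
        using that unfolding cjp_rel_def by (metis order.trans)
      show "f j \<le> a" if "\<forall>y. cjp_rel f y j \<longrightarrow> y \<le> a"
        by (rule le_by_cjp_below[OF dense]) (use that j in \<open>simp add: cjp_rel_def\<close>)
    qed
    finally show ?thesis .
  qed
  then show ?thesis unfolding cjp_below_def blacktri_down_def cjp_rel_def by auto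
qed

theorem theorem4p4:
  fixes f g :: "'a::complete_lattice \<Rightarrow> 'a"
  assumes "heyting_brouwer TYPE('a)"
    and "galois_conn f g"
    and "weakly_atomic TYPE('a)"
  shows "\<exists>(X::'a set) le R \<phi>.
           gc_frame X le R \<and>
           bij_betw \<phi> (UNIV::'a set) (up_sets X le) \<and>
           (\<forall>a b. \<phi> (sup a b) = \<phi> a \<union> \<phi> b) \<and>
           (\<forall>a b. \<phi> (inf a b) = \<phi> a \<inter> \<phi> b) \<and>
           (\<forall>a b. \<phi> (hb_imp a b) = up_imp X le (\<phi> a) (\<phi> b)) \<and>
           (\<forall>a b. \<phi> (hb_coimp a b) = up_coimp X le (\<phi> a) (\<phi> b)) \<and>
           (\<forall>a. \<phi> (f a) = blacktri_up X R (\<phi> a)) \<and>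
           (\<forall>a. \<phi> (g a) = blacktri_down X R (\<phi> a)) \<and>
           \<phi> bot = {} \<and> \<phi> top = X"
proof -
  note hb = assms(1) and gc = assms(2)
  have dense: "\<And>x::'a. Sup (cjp_below x) = x" using Sup_cjp_below[OF hb assms(3)] .
  show ?thesis
    by (intro exI[of _ "Collect completely_join_prime"] exI[of _ cjp_ge] exI[of _ "cjp_rel f"]
        exI[of _ cjp_below] conjI allI gc_frame_cjp galois_conn_mono[OF gc] bij_betw_cjp_below[OF dense]
        cjp_below_sup cjp_below_inf cjp_below_hb_imp[OF hb dense] cjp_below_hb_coimp[OF hb dense]
        cjp_below_galois_lower[OF gc dense] cjp_below_galois_upper[OF gc dense]
        cjp_below_bot cjp_below_top)
qed

end
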